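(* Let $\varphi$ be an automorphism of $E$ with $\varphi^2=\mathrm{id}_E$ and let $\beta=\{e_1,e_2,\ldots\}$ be a basis of $L$. Let $I=\{n\mid\varphi(e_n)=\pm e_n\}$, $I^+=\{i\in I\mid\varphi(e_i)=e_i\}$, $I^-=\{i\in I\mid\varphi(e_i)=-e_i\}$, $J=\mathbb{N}\setminus I$, and $a_j=(e_j+\varphi(e_j))/2$. Suppose $\varphi$ is of type S4, i.e. $I^+$ is finite, $I^-$ is infinite, $J$ is finite and $J\ne\emptyset$. If each $a_j$, $j\in J$, is a linear combination of monomials of length $\ge3$, then $T_2(E_\varphi)=T_2(E_{\varphi_\ell})$, where $\varphi_\ell$ is the linearization of $\varphi$.
   Context: $F$ is a field of characteristic zero, $L$ an infinite-dimensional $F$-vector space with basis $e_1,e_2,\ldots$, $E$ its Grassmann algebra (basis $1$ and monomials $e_{i_1}\cdots e_{i_k}$, $i_1<\cdots<i_k$, $e_ie_j=-e_je_i$); the length of such a monomial is $k$. For an automorphism $\psi$ of $E$ with $\psi^2=\mathrm{id}$, $E_\psi=E_{0,\psi}\oplus E_{1,\psi}$ is the $\mathbb{Z}_2$-grading by the eigenspaces of $\psi$ for eigenvalues $1$ and $-1$. Linearization: write $\varphi(e_i)=u_i+v_i$ with $u_i\in L$ and $v_i$ a linear combination of monomials of length $\ge2$; $\varphi_\ell$ is the endomorphism of $E$ with $\varphi_\ell(e_i)=u_i$. $T_2(A)$ is the ideal of $\mathbb{Z}_2$-graded polynomial identities of a superalgebra $A$ in the free algebra $F\langle Y\cup Z\rangle$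 ($Y$ even variables, $Z$ odd variables). *)

theory Defs
  imports Main
begin

text \<open>An element of E is a finitely supported coefficient function on finite
 subsets S of nat; S = {i1 < ... < ik} stands for the monomial e_i1 ... e_ik.\<close>

type_synonym 'a grass = "nat set \<Rightarrow> 'a"

definition grass :: "'a::field grass set" where
  "grass = {x. finite {S. x S \<noteq> 0} \<and> (\<forall>S. x S \<noteq> 0 \<longrightarrow> finite S)}"

definition gsign :: "nat set \<Rightarrow> nat set \<Rightarrow> 'a::field" where
  "gsign A B = (-1) ^ card {(a,b). a \<in> A \<and> b \<in> B \<and> b < a}"

definition gmult :: "'a::field grass \<Rightarrow> 'a grass \<Rightarrow> 'a grass" where
  "gmult x y = (\<lambda>S. if finite S then (\<Sum>A\<in>Pow S. gsign A (S - A) * x A * y (S - A)) else 0)"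

definition gone :: "'a::field grass" where
  "gone = (\<lambda>S. if S = {} then 1 else 0)"

definition gadd :: "'a::field grass \<Rightarrow> 'a grass \<Rightarrow> 'a grass" where
  "gadd x y = (\<lambda>S. x S + y S)"

definition gscale :: "'a::field \<Rightarrow> 'a grass \<Rightarrow> 'a grass" where
  "gscale c x = (\<lambda>S. c * x S)"

definition gneg :: "'a::field grass \<Rightarrow> 'a grass" where
  "gneg x = (\<lambda>S. - x S)"

definition gen :: "nat \<Rightarrow> 'a::field grass" where
  "gen i = (\<lambda>S. if S = {i} then 1 else 0)"

definition is_automorphism :: "('a::field grass \<Rightarrow> 'a grass) \<Rightarrow> bool" where
  "is_automorphism \<phi> \<longleftrightarrow>
     bij_betw \<phi> grass grass \<and>
     (\<forall>x\<in>grass. \<forall>y\<in>grass. \<phi> (gadd x y) = gadd (\<phi> x) (\<phi> y)) \<and>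
     (\<forall>c. \<forall>x\<in>grass. \<phi> (gscale c x) = gscale c (\<phi> x)) \<and>
     (\<forall>x\<in>grass. \<forall>y\<in>grass. \<phi> (gmult x y) = gmult (\<phi> x) (\<phi> y)) \<and>
     \<phi> gone = gone"

definition lin_part :: "('a::field grass \<Rightarrow> 'a grass) \<Rightarrow> nat \<Rightarrow> 'a grass" where
  "lin_part \<phi> i = (\<lambda>S. if card S = 1 then \<phi> (gen i) S else 0)"

definition mono_prod :: "(nat \<Rightarrow> 'a::field grass) \<Rightarrow> nat set \<Rightarrow> 'a grass" where
  "mono_prod f S = foldr (\<lambda>i acc. gmult (f i) acc) (sorted_list_of_set S) gone"

text \<open>The linearization phi_l: the endomorphism of E with e_i \<mapsto> u_i.\<close>
definition linearization :: "('a::field grass \<Rightarrow> 'a grass) \<Rightarrow> 'a grass \<Rightarrow> 'a grass" where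
  "linearization \<phi> x = (\<lambda>T. \<Sum>S\<in>{S. x S \<noteq> 0}. x S * mono_prod (lin_part \<phi>) S T)"

definition even_part :: "('a::field grass \<Rightarrow> 'a grass) \<Rightarrow> 'a grass set" where
  "even_part \<psi> = {x\<in>grass. \<psi> x = x}"

definition odd_part :: "('a::field grass \<Rightarrow> 'a grass) \<Rightarrow> 'a grass set" where
  "odd_part \<psi> = {x\<in>grass. \<psi> x = gneg x}"

text \<open>Variables: Inl k is the even variable y_k, Inr k the odd variable z_k.
 A noncommutative polynomial is a finitely supported function on words.\<close>

type_synonym gvar = "nat + nat"
type_synonym 'a fpoly = "gvar list \<Rightarrow> 'a"

definition free_alg :: "'a::field fpoly set" where
  "free_alg = {f. finite {w. f w \<noteq> 0}}"

definition eval_word :: "(gvar \<Rightarrow> 'a::field grass) \<Rightarrow> gvar list \<Rightarrow> 'a grass" where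
  "eval_word \<sigma> w = foldr (\<lambda>v acc. gmult (\<sigma> v) acc) w gone"

definition eval_poly :: "'a::field fpoly \<Rightarrow> (gvar \<Rightarrow> 'a grass) \<Rightarrow> 'a grass" where
  "eval_poly f \<sigma> = (\<lambda>T. \<Sum>w\<in>{w. f w \<noteq> 0}. f w * eval_word \<sigma> w T)"

definition graded_assignment :: "('a::field grass \<Rightarrow> 'a grass) \<Rightarrow> (gvar \<Rightarrow> 'a grass) \<Rightarrow> bool" where
  "graded_assignment \<psi> \<sigma> \<longleftrightarrow>
     (\<forall>k. \<sigma> (Inl k) \<in> even_part \<psi>) \<and> (\<forall>k. \<sigma> (Inr k) \<in> odd_part \<psi>)"

definition T2 :: "('a::field grass \<Rightarrow> 'a grass) \<Rightarrow> 'a fpoly set" where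
  "T2 \<psi> = {f\<in>free_alg. \<forall>\<sigma>. graded_assignment \<psi> \<sigma> \<longrightarrow> eval_poly f \<sigma> = (\<lambda>_. 0)}"

definition Iplus :: "('a::field grass \<Rightarrow> 'a grass) \<Rightarrow> nat set" where
  "Iplus \<phi> = {n. \<phi> (gen n) = gen n}"

definition Iminus :: "('a::field grass \<Rightarrow> 'a grass) \<Rightarrow> nat set" where
  "Iminus \<phi> = {n. \<phi> (gen n) = gneg (gen n)}"

definition Iset :: "('a::field grass \<Rightarrow> 'a grass) \<Rightarrow> nat set" where
  "Iset \<phi> = Iplus \<phi> \<union> Iminus \<phi>"

definition Jset :: "('a::field grass \<Rightarrow> 'a grass) \<Rightarrow> nat set" where
  "Jset \<phi> = UNIV - Iset \<phi>"

definition avec :: "('a::field grass \<Rightarrow> 'a grass) \<Rightarrow> nat \<Rightarrow> 'a grass" where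
  "avec \<phi> j = (\<lambda>S. (gen j S + \<phi> (gen j) S) / 2)"

end

theory Submission
  imports Defs
begin

text \<open>
  Every \<open>\<phi>(e\<^sub>n)\<close> is odd, because \<open>e\<^sub>i\<close> anticommutes with it for the infinitely
  many \<open>i \<in> I\<^sup>-\<close> outside its support. Put \<open>g\<^sub>j = e\<^sub>j - a\<^sub>j = (e\<^sub>j - \<phi>(e\<^sub>j))/2\<close>
  for \<open>j \<in> J\<close> and \<open>g\<^sub>i = e\<^sub>i\<close> for \<open>i \<in> I\<close>. These are odd, so \<open>e\<^sub>i \<mapsto> g\<^sub>i\<close>
  extends to an endomorphism \<open>\<theta>\<close> of \<open>E\<close>; as \<open>\<phi>\<close> is an involution,
  \<open>\<phi>(g\<^sub>i) = \<epsilon>\<^sub>i g\<^sub>i\<close> with \<open>\<epsilon>\<^sub>i = 1\<close> on \<open>I\<^sup>+\<close> and \<open>-1\<close> elsewhere. Since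
  \<open>a\<^sub>j\<close> has no linear part, also \<open>\<phi>\<^sub>\<ell>(e\<^sub>i) = \<epsilon>\<^sub>i e\<^sub>i\<close>, so the homomorphisms
  \<open>\<theta> \<circ> \<phi>\<^sub>\<ell>\<close> and \<open>\<phi> \<circ> \<theta>\<close> agree on generators and hence everywhere. Finally
  \<open>g\<^sub>i\<close> is \<open>e\<^sub>i\<close> plus longer monomials in finitely many generators, so \<open>\<theta>\<close> is
  unitriangular with respect to length and thus bijective: it is an isomorphism of
  superalgebras from \<open>E\<^sub>\<phi>\<^sub>\<ell>\<close> onto \<open>E\<^sub>\<phi>\<close>, and isomorphic superalgebras satisfy the
  same graded identities.
\<close>

definition inversions :: "nat set \<Rightarrow> nat set \<Rightarrow> nat" where
  "inversions A B = card {(a, b). a \<in> A \<and> b \<in> B \<and> b < a}"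

lemma gsign_eq_inversions: "gsign A B = (-1) ^ inversions A B"
  by (simp add: gsign_def inversions_def)

lemma gsign_nonzero: "(gsign A B :: 'a::field) \<noteq> 0"
  by (simp add: gsign_def)

lemma gsign_empty [simp]: "gsign {} B = 1" "gsign A {} = 1"
  by (simp_all add: gsign_def)

lemma finite_pairs_in_product:
  "finite A \<Longrightarrow> finite B \<Longrightarrow> finite {(a, b). a \<in> A \<and> b \<in> B \<and> P a b}"
  by (rule finite_subset[of _ "A \<times> B"]) auto

lemma inversions_Un_left:
  assumes "finite A" "finite B" "finite C" "A \<inter> B = {}"
  shows "inversions (A \<union> B) C = inversions A C + inversions B C"
proof -
  have "{(a, b). a \<in> A \<union> B \<and> b \<in> C \<and> b < a} =
      {(a, b). a \<in> A \<and> b \<in> C \<and> b < a} \<union> {(a, b). a \<in> B \<and> b \<in> C \<and> b < a}"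
    by auto
  then show ?thesis
    unfolding inversions_def using assms
    by (simp add: card_Un_disjoint finite_pairs_in_product disjoint_iff)
qed

lemma inversions_Un_right:
  assumes "finite A" "finite B" "finite C" "B \<inter> C = {}"
  shows "inversions A (B \<union> C) = inversions A B + inversions A C"
proof -
  have "{(a, b). a \<in> A \<and> b \<in> B \<union> C \<and> b < a} =
      {(a, b). a \<in> A \<and> b \<in> B \<and> b < a} \<union> {(a, b). a \<in> A \<and> b \<in> C \<and> b < a}"
    by auto
  then show ?thesis
    unfolding inversions_def using assms
    by (simp add: card_Un_disjoint finite_pairs_in_product disjoint_iff)
qed

lemma inversions_add_swap:
  assumes "finite A" "finite B" "A \<inter> B = {}"
  shows "inversions A B + inversions B A = card A * card B"
proof -
  have swap: "inversions B A = card {(a, b). a \<in> A \<and> b \<in> B \<and> a < b}"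
    unfolding inversions_def
    by (rule bij_betw_same_card[where f = "\<lambda>(x, y). (y, x)"])
      (auto simp: bij_betw_def inj_on_def image_def)
  have split: "A \<times> B
      = {(a, b). a \<in> A \<and> b \<in> B \<and> b < a} \<union> {(a, b). a \<in> A \<and> b \<in> B \<and> a < b}"
    using assms by (auto simp: disjoint_iff) (metis linorder_neqE_nat)
  have "card (A \<times> B) = inversions A B + card {(a, b). a \<in> A \<and> b \<in> B \<and> a < b}"
    unfolding split inversions_def
    by (rule card_Un_disjoint) (auto simp: assms finite_pairs_in_product)
  with swap show ?thesis by (simp add: card_cartesian_product)
qed

lemma gsign_cocycle:
  assumes "finite A" "finite B" "finite C" "A \<inter> B = {}" "A \<inter> C = {}" "B \<inter> C = {}"
  shows "gsign (A \<union> B) C * gsign A B = (gsign A (B \<union> C) * gsign B C :: 'a::field)"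
  using assms
  by (simp add: gsign_eq_inversions inversions_Un_left inversions_Un_right
      power_add[symmetric] ac_simps)

lemma gsign_swap:
  assumes "finite A" "finite B" "A \<inter> B = {}"
  shows "(gsign B A :: 'a::field) = (-1) ^ (card A * card B) * gsign A B"
proof -
  have "(-1 :: 'a) ^ (card A * card B) * gsign A B
      = (-1) ^ inversions B A * ((-1) ^ inversions A B * (-1) ^ inversions A B)"
    by (simp add: inversions_add_swap[OF assms, symmetric] gsign_eq_inversions power_add ac_simps)
  then show ?thesis
    by (simp add: gsign_eq_inversions)
qed

lemma gsign_singleton_below:
  assumes "\<forall>x\<in>X. i < x"
  shows "gsign {i} X = 1"
proof -
  have no_inversions: "{(a, b). a \<in> {i} \<and> b \<in> X \<and> b < a} = {}"
    using assms by auto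
  show ?thesis
    unfolding gsign_def no_inversions by simp
qed

lemma gsign_singleton_insert_below:
  assumes "s < i" "s \<notin> X" "finite X"
  shows "(gsign {i} (insert s X) :: 'a::field) = - gsign {i} X"
proof -
  have "{(a, b). a \<in> {i} \<and> b \<in> {s} \<and> b < a} = {(i, s)}"
    using assms by auto
  then have "inversions {i} ({s} \<union> X) = 1 + inversions {i} X"
    using assms inversions_Un_right[of "{i}" "{s}" X] by (simp add: inversions_def)
  then show ?thesis
    by (simp add: gsign_eq_inversions)
qed

lemma gmult_finite:
  "finite S \<Longrightarrow> gmult x y S = (\<Sum>A\<in>Pow S. gsign A (S - A) * x A * y (S - A))"
  by (simp add: gmult_def)

lemma gmult_infinite: "infinite S \<Longrightarrow> gmult x y S = 0"
  by (simp add: gmult_def)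

lemma sum_Pow_Pow_reindex:
  assumes "finite S"
  shows "(\<Sum>U\<in>Pow S. \<Sum>A\<in>Pow U. f U A) = (\<Sum>A\<in>Pow S. \<Sum>B\<in>Pow (S - A). f (A \<union> B) A)"
proof -
  have "(\<Sum>U\<in>Pow S. \<Sum>A\<in>Pow U. f U A) = (\<Sum>U\<in>Pow S. \<Sum>A\<in>{A. A \<in> Pow S \<and> A \<subseteq> U}. f U A)"
    by (rule sum.cong[OF refl], rule sum.cong) auto
  also have "\<dots> = (\<Sum>A\<in>Pow S. \<Sum>U\<in>{U. U \<in> Pow S \<and> A \<subseteq> U}. f U A)"
    using assms by (intro sum.swap_restrict) auto
  also have "\<dots> = (\<Sum>A\<in>Pow S. \<Sum>B\<in>Pow (S - A). f (A \<union> B) A)"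
  proof (rule sum.cong[OF refl])
    fix A assume "A \<in> Pow S"
    then show "(\<Sum>U\<in>{U. U \<in> Pow S \<and> A \<subseteq> U}. f U A) = (\<Sum>B\<in>Pow (S - A). f (A \<union> B) A)"
      by (intro sum.reindex_bij_witness[where i = "\<lambda>B. A \<union> B" and j = "\<lambda>U. U - A"])
        (auto simp: Un_absorb1)
  qed
  finally show ?thesis .
qed

lemma gmult_assoc: "gmult (gmult x y) z = gmult x (gmult y z)"
proof (rule ext)
  fix S
  show "gmult (gmult x y) z S = gmult x (gmult y z) S"
  proof (cases "finite S")
    case False
    then show ?thesis by (simp add: gmult_infinite)
  next
    case True
    define F where "F U A = gsign U (S - U) * gsign A (U - A) * x A * y (U - A) * z (S - U)"
      for U A
    have "gmult (gmult x y) z S = (\<Sum>U\<in>Pow S. \<Sum>A\<in>Pow U. F U A)"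
      unfolding gmult_finite[OF True, of "gmult x y"]
    proof (rule sum.cong[OF refl])
      fix U assume "U \<in> Pow S"
      then have "finite U"
        using True finite_subset by auto
      then show "gsign U (S - U) * gmult x y U * z (S - U) = (\<Sum>A\<in>Pow U. F U A)"
        by (simp add: gmult_finite F_def sum_distrib_left sum_distrib_right ac_simps)
    qed
    also have "\<dots> = (\<Sum>A\<in>Pow S. \<Sum>B\<in>Pow (S - A). F (A \<union> B) A)"
      by (rule sum_Pow_Pow_reindex[OF True])
    also have "\<dots> = gmult x (gmult y z) S"
      unfolding gmult_finite[OF True]
    proof (rule sum.cong[OF refl])
      fix A assume A: "A \<in> Pow S"
      show "(\<Sum>B\<in>Pow (S - A). F (A \<union> B) A) = gsign A (S - A) * x A * gmult y z (S - A)"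
        unfolding gmult_finite[OF finite_Diff[OF True]] sum_distrib_left
      proof (rule sum.cong[OF refl])
        fix B assume B: "B \<in> Pow (S - A)"
        have parts: "A \<union> B - A = B" "S - (A \<union> B) = S - A - B" "B \<union> (S - A - B) = S - A"
          using A B by auto
        have "gsign (A \<union> B) (S - A - B) * gsign A B
            = (gsign A (B \<union> (S - A - B)) * gsign B (S - A - B) :: 'a)"
          using A B True by (intro gsign_cocycle) (auto intro: finite_subset)
        then show "F (A \<union> B) A = gsign A (S - A) * x A * (gsign B (S - A - B) * y B * z (S - A - B))"
          unfolding F_def parts by (simp add: ac_simps)
      qed
    qed
    finally show ?thesis .
  qed
qed

lemma gmult_gscale_left: "gmult (gscale c x) y = gscale c (gmult x y)"
  by (rule ext) (simp add: gmult_def gscale_def sum_distrib_left ac_simps)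

lemma gmult_gscale_right: "gmult x (gscale c y) = gscale c (gmult x y)"
  by (rule ext) (simp add: gmult_def gscale_def sum_distrib_left ac_simps)

lemma gmult_zero_left [simp]: "gmult (\<lambda>_. 0) y = (\<lambda>_. 0)"
  by (rule ext) (simp add: gmult_def)

lemma gneg_eq_gscale: "gneg x = gscale (-1) x"
  by (simp add: gneg_def gscale_def)

lemma gscale_gscale [simp]: "gscale a (gscale b x) = gscale (a * b) x"
  by (simp add: gscale_def ac_simps)

lemma gscale_one [simp]: "gscale 1 x = x"
  by (simp add: gscale_def)

lemma gscale_zero [simp]: "gscale 0 x = (\<lambda>_. 0)"
  by (simp add: gscale_def)

lemma grass_finite_support: "x \<in> grass \<Longrightarrow> finite {S. x S \<noteq> 0}"
  by (simp add: grass_def)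

lemma grass_finite_monomial: "x \<in> grass \<Longrightarrow> x S \<noteq> 0 \<Longrightarrow> finite S"
  by (simp add: grass_def)

lemma zero_in_grass [simp]: "(\<lambda>_. 0) \<in> grass"
  by (simp add: grass_def)

lemma gadd_in_grass [simp]: "x \<in> grass \<Longrightarrow> y \<in> grass \<Longrightarrow> gadd x y \<in> grass"
  unfolding grass_def gadd_def
  by (auto intro: finite_subset[of _ "{S. x S \<noteq> 0} \<union> {S. y S \<noteq> 0}"]) (metis add.right_neutral)

lemma gscale_in_grass [simp]: "x \<in> grass \<Longrightarrow> gscale c x \<in> grass"
  unfolding grass_def gscale_def by (auto intro: finite_subset[of _ "{S. x S \<noteq> 0}"])

lemma gneg_in_grass [simp]: "x \<in> grass \<Longrightarrow> gneg x \<in> grass"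
  by (simp add: gneg_eq_gscale)

lemma gen_in_grass [simp]: "gen i \<in> grass"
  unfolding grass_def gen_def by (auto intro: finite_subset[of _ "{{i}}"])

lemma gone_in_grass [simp]: "gone \<in> grass"
  unfolding grass_def gone_def by (auto intro: finite_subset[of _ "{{}}"])

lemma gmult_in_grass [simp]:
  assumes "x \<in> grass" "y \<in> grass"
  shows "gmult x y \<in> grass"
proof -
  have "{T. gmult x y T \<noteq> 0} \<subseteq> (\<lambda>(A, B). A \<union> B) ` ({A. x A \<noteq> 0} \<times> {B. y B \<noteq> 0})"
  proof
    fix T assume "T \<in> {T. gmult x y T \<noteq> 0}"
    then have nonzero: "gmult x y T \<noteq> 0" by simp
    then have "finite T" using gmult_infinite by blast
    from nonzero obtain A where "A \<in> Pow T" "gsign A (T - A) * x A * y (T - A) \<noteq> 0"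
      unfolding gmult_finite[OF \<open>finite T\<close>] by (rule sum.not_neutral_contains_not_neutral)
    then show "T \<in> (\<lambda>(A, B). A \<union> B) ` ({A. x A \<noteq> 0} \<times> {B. y B \<noteq> 0})"
      by (auto intro!: image_eqI[of _ _ "(A, T - A)"])
  qed
  moreover have "finite ((\<lambda>(A, B). A \<union> B) ` ({A. x A \<noteq> 0} \<times> {B. y B \<noteq> 0}))"
    using assms by (simp add: grass_finite_support)
  ultimately have "finite {T. gmult x y T \<noteq> 0}"
    by (rule finite_subset)
  then show ?thesis
    using gmult_infinite by (auto simp: grass_def)
qed

lemma gmult_gone_left:
  assumes "z \<in> grass"
  shows "gmult gone z = z"
proof (rule ext)
  fix S
  show "gmult gone z S = z S"
  proof (cases "finite S")
    case True
    have "gmult gone z S = (\<Sum>A\<in>Pow S. if A = {} then z S else 0)"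
      unfolding gmult_finite[OF True] by (rule sum.cong) (auto simp: gone_def)
    with True show ?thesis by (simp add: sum.delta')
  qed (use assms in \<open>auto simp: gmult_infinite grass_def\<close>)
qed

lemma gmult_gone_right:
  assumes "z \<in> grass"
  shows "gmult z gone = z"
proof (rule ext)
  fix S
  show "gmult z gone S = z S"
  proof (cases "finite S")
    case True
    have "gmult z gone S = (\<Sum>A\<in>Pow S. if A = S then z S else 0)"
      unfolding gmult_finite[OF True] by (rule sum.cong) (auto simp: gone_def)
    with True show ?thesis by (simp add: sum.delta')
  qed (use assms in \<open>auto simp: gmult_infinite grass_def\<close>)
qed

lemma gmult_gen_left:
  assumes "finite T"
  shows "gmult (gen i) x T = (if i \<in> T then gsign {i} (T - {i}) * x (T - {i}) else 0)"
proof -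
  have "gmult (gen i) x T = (\<Sum>A\<in>Pow T. if A = {i} then gsign {i} (T - {i}) * x (T - {i}) else 0)"
    unfolding gmult_finite[OF assms] by (rule sum.cong) (auto simp: gen_def)
  with assms show ?thesis by (simp add: sum.delta')
qed

lemma gmult_gen_right:
  assumes "finite T"
  shows "gmult x (gen i) T = (if i \<in> T then gsign (T - {i}) {i} * x (T - {i}) else 0)"
proof -
  have "gmult x (gen i) T = (\<Sum>A\<in>Pow T. if A = T - {i}
      then (if i \<in> T then gsign (T - {i}) {i} * x (T - {i}) else 0) else 0)"
    unfolding gmult_finite[OF assms]
  proof (rule sum.cong[OF refl])
    fix A assume A: "A \<in> Pow T"
    then have "T - A = {i} \<longleftrightarrow> i \<in> T \<and> A = T - {i}"
      by auto
    with A show "gsign A (T - A) * x A * gen i (T - A)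
        = (if A = T - {i} then (if i \<in> T then gsign (T - {i}) {i} * x (T - {i}) else 0) else 0)"
      by (auto simp: gen_def)
  qed
  with assms show ?thesis by (simp add: sum.delta')
qed

definition lincomb :: "'b set \<Rightarrow> ('b \<Rightarrow> 'a::field) \<Rightarrow> ('b \<Rightarrow> 'a grass) \<Rightarrow> 'a grass" where
  "lincomb F c P = (\<lambda>T. \<Sum>s\<in>F. c s * P s T)"

definition gmon :: "nat set \<Rightarrow> 'a::field grass" where
  "gmon S = (\<lambda>T. if T = S then 1 else 0)"

lemma lincomb_empty [simp]: "lincomb {} c P = (\<lambda>_. 0)"
  by (simp add: lincomb_def)

lemma lincomb_insert:
  "finite F \<Longrightarrow> s \<notin> F \<Longrightarrow> lincomb (insert s F) c P = gadd (gscale (c s) (P s)) (lincomb F c P)"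
  by (simp add: lincomb_def gadd_def gscale_def)

lemma lincomb_cong: "(\<And>s. s \<in> F \<Longrightarrow> P s = Q s) \<Longrightarrow> lincomb F c P = lincomb F c Q"
  by (simp add: lincomb_def)

lemma lincomb_in_grass [simp]:
  "finite F \<Longrightarrow> (\<And>s. s \<in> F \<Longrightarrow> P s \<in> grass) \<Longrightarrow> lincomb F c P \<in> grass"
  by (induction F rule: finite_induct) (simp_all add: lincomb_insert)

lemma gmult_lincomb_left: "gmult (lincomb F c P) y = lincomb F c (\<lambda>s. gmult (P s) y)"
proof (rule ext)
  fix T
  show "gmult (lincomb F c P) y T = lincomb F c (\<lambda>s. gmult (P s) y) T"
  proof (cases "finite T")
    case True
    show ?thesis
      unfolding lincomb_def gmult_finite[OF True] sum_distrib_left sum_distrib_right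
      by (subst sum.swap) (simp add: ac_simps)
  qed (simp add: gmult_infinite lincomb_def)
qed

lemma gmult_lincomb_right: "gmult y (lincomb F c P) = lincomb F c (\<lambda>s. gmult y (P s))"
proof (rule ext)
  fix T
  show "gmult y (lincomb F c P) T = lincomb F c (\<lambda>s. gmult y (P s)) T"
  proof (cases "finite T")
    case True
    show ?thesis
      unfolding lincomb_def gmult_finite[OF True] sum_distrib_left sum_distrib_right
      by (subst sum.swap) (simp add: ac_simps)
  qed (simp add: gmult_infinite lincomb_def)
qed

lemma gmon_in_grass [simp]: "finite S \<Longrightarrow> gmon S \<in> grass"
  unfolding grass_def gmon_def by (auto intro: finite_subset[of _ "{S}"])

lemma gen_eq_gmon: "gen i = gmon {i}"
  by (simp add: gen_def gmon_def)

lemma gone_eq_gmon: "gone = gmon {}"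
  by (simp add: gone_def gmon_def)

lemma lincomb_gmon:
  assumes "finite {S. x S \<noteq> 0}"
  shows "lincomb {S. x S \<noteq> 0} x gmon = x"
proof (rule ext)
  fix T
  have "lincomb {S. x S \<noteq> 0} x gmon T = (\<Sum>S\<in>{S. x S \<noteq> 0}. if T = S then x T else 0)"
    unfolding lincomb_def by (rule sum.cong) (auto simp: gmon_def)
  then show "lincomb {S. x S \<noteq> 0} x gmon T = x T"
    using assms by (simp add: sum.delta)
qed

lemma gmult_gen_gmon:
  assumes "finite S"
  shows "gmult (gen i) (gmon S) = gscale (if i \<in> S then 0 else gsign {i} S) (gmon (insert i S))"
proof (rule ext)
  fix T
  show "gmult (gen i) (gmon S) T = gscale (if i \<in> S then 0 else gsign {i} S) (gmon (insert i S)) T"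
  proof (cases "finite T")
    case True
    then show ?thesis
      by (auto simp: gmult_gen_left gscale_def gmon_def)
  next
    case False
    with assms have "T \<noteq> insert i S" by auto
    with False show ?thesis by (simp add: gmult_infinite gscale_def gmon_def)
  qed
qed

definition glinear :: "('a::field grass \<Rightarrow> 'a grass) \<Rightarrow> bool" where
  "glinear h \<longleftrightarrow> (\<forall>x\<in>grass. \<forall>y\<in>grass. h (gadd x y) = gadd (h x) (h y)) \<and>
     (\<forall>c. \<forall>x\<in>grass. h (gscale c x) = gscale c (h x))"

lemma glinear_gadd:
  "glinear h \<Longrightarrow> x \<in> grass \<Longrightarrow> y \<in> grass \<Longrightarrow> h (gadd x y) = gadd (h x) (h y)"
  by (simp add: glinear_def)

lemma glinear_gscale: "glinear h \<Longrightarrow> x \<in> grass \<Longrightarrow> h (gscale c x) = gscale c (h x)"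
  by (simp add: glinear_def)

lemma glinear_gneg: "glinear h \<Longrightarrow> x \<in> grass \<Longrightarrow> h (gneg x) = gneg (h x)"
  by (simp add: glinear_def gneg_eq_gscale)

lemma glinear_zero: "glinear h \<Longrightarrow> h (\<lambda>_. 0) = (\<lambda>_. 0)"
  using glinear_gscale[of h gone 0] by simp

lemma glinear_lincomb:
  assumes h: "glinear h" and "finite F" and "\<And>s. s \<in> F \<Longrightarrow> P s \<in> grass"
  shows "h (lincomb F c P) = lincomb F c (\<lambda>s. h (P s))"
  using assms(2,3)
proof (induction F rule: finite_induct)
  case empty
  then show ?case by (simp add: glinear_zero[OF h])
next
  case (insert s F)
  then show ?case
    using h by (simp add: lincomb_insert glinear_def)
qed

definition ghom :: "('a::field grass \<Rightarrow> 'a grass) \<Rightarrow> bool" where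
  "ghom h \<longleftrightarrow> glinear h \<and> (\<forall>x\<in>grass. \<forall>y\<in>grass. h (gmult x y) = gmult (h x) (h y)) \<and>
     h gone = gone \<and> (\<forall>x\<in>grass. h x \<in> grass)"

lemma ghom_comp: "ghom h \<Longrightarrow> ghom k \<Longrightarrow> ghom (h \<circ> k)"
  by (simp add: ghom_def glinear_def)

lemma ghom_if_automorphism: "is_automorphism \<phi> \<Longrightarrow> ghom \<phi>"
  by (auto simp: ghom_def glinear_def is_automorphism_def bij_betw_apply)

definition godd :: "'a::field grass \<Rightarrow> bool" where
  "godd x \<longleftrightarrow> (\<forall>S. x S \<noteq> 0 \<longrightarrow> odd (card S))"

lemma godd_gen [simp]: "godd (gen i)"
  by (simp add: godd_def gen_def)

lemma godd_gscale [simp]: "godd x \<Longrightarrow> godd (gscale c x)"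
  by (simp add: godd_def gscale_def)

lemma godd_gadd [simp]: "godd x \<Longrightarrow> godd y \<Longrightarrow> godd (gadd x y)"
  by (auto simp: godd_def gadd_def) (metis add.right_neutral)

lemma godd_gneg [simp]: "godd (gneg x) = godd x"
  by (simp add: godd_def gneg_def)

lemma gmult_anticomm:
  assumes "godd x" "godd y"
  shows "gmult x y = gneg (gmult y x)"
proof (rule ext)
  fix T
  show "gmult x y T = gneg (gmult y x) T"
  proof (cases "finite T")
    case True
    have "gmult y x T = (\<Sum>A\<in>Pow T. gsign (T - A) A * y (T - A) * x A)"
      unfolding gmult_finite[OF True]
      by (rule sum.reindex_bij_witness[where i = "\<lambda>A. T - A" and j = "\<lambda>A. T - A"])
        (auto simp: double_diff)
    also have "\<dots> = - (\<Sum>A\<in>Pow T. gsign A (T - A) * x A * y (T - A))"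
      unfolding sum_negf[symmetric]
    proof (rule sum.cong[OF refl])
      fix A assume A: "A \<in> Pow T"
      show "gsign (T - A) A * y (T - A) * x A = - (gsign A (T - A) * x A * y (T - A))"
      proof (cases "x A = 0 \<or> y (T - A) = 0")
        case False
        then have "odd (card A * card (T - A))"
          using assms by (auto simp: godd_def)
        moreover have "finite A"
          using A True by (auto intro: finite_subset)
        ultimately have "(gsign (T - A) A :: 'a) = - gsign A (T - A)"
          using gsign_swap[of A "T - A"] True by auto
        then show ?thesis by simp
      qed auto
    qed
    finally show ?thesis
      unfolding gneg_def gmult_finite[OF True] by simp
  qed (simp add: gmult_infinite gneg_def)
qed

lemma gmult_self_eq_zero:
  fixes x :: "'a::field_char_0 grass"
  assumes "godd x"
  shows "gmult x x = (\<lambda>_. 0)"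
proof (rule ext)
  fix T
  have "gmult x x T = - gmult x x T"
    using fun_cong[OF gmult_anticomm[OF assms assms], of T] by (simp add: gneg_def)
  then show "gmult x x T = 0" by simp
qed

section \<open>Substitution homomorphisms\<close>

definition gprod_list :: "(nat \<Rightarrow> 'a::field grass) \<Rightarrow> nat list \<Rightarrow> 'a grass" where
  "gprod_list g xs = foldr (\<lambda>i acc. gmult (g i) acc) xs gone"

lemma gprod_list_Nil [simp]: "gprod_list g [] = gone"
  by (simp add: gprod_list_def)

lemma gprod_list_Cons [simp]: "gprod_list g (i # xs) = gmult (g i) (gprod_list g xs)"
  by (simp add: gprod_list_def)

lemma gprod_list_in_grass [simp]: "(\<And>i. g i \<in> grass) \<Longrightarrow> gprod_list g xs \<in> grass"
  by (induction xs) simp_all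

lemma mono_prod_eq_gprod_list: "mono_prod g S = gprod_list g (sorted_list_of_set S)"
  by (simp add: mono_prod_def gprod_list_def)

lemma mono_prod_in_grass [simp]: "(\<And>i. g i \<in> grass) \<Longrightarrow> mono_prod g S \<in> grass"
  by (simp add: mono_prod_eq_gprod_list)

lemma ghom_gprod_list:
  "ghom h \<Longrightarrow> (\<And>i. g i \<in> grass) \<Longrightarrow> h (gprod_list g xs) = gprod_list (\<lambda>i. h (g i)) xs"
  by (induction xs) (simp_all add: ghom_def)

lemma ghom_mono_prod:
  "ghom h \<Longrightarrow> (\<And>i. g i \<in> grass) \<Longrightarrow> h (mono_prod g S) = mono_prod (\<lambda>i. h (g i)) S"
  by (simp add: mono_prod_eq_gprod_list ghom_gprod_list)

lemma gprod_list_gen_sorted: "sorted_wrt (<) xs \<Longrightarrow> gprod_list gen xs = gmon (set xs)"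
proof (induction xs)
  case Nil
  then show ?case by (simp add: gone_eq_gmon)
next
  case (Cons s xs)
  then have "s \<notin> set xs" "\<forall>x\<in>set xs. s < x"
    by auto
  with Cons show ?case
    by (simp add: gmult_gen_gmon gsign_singleton_below)
qed

lemma mono_prod_gen: "finite S \<Longrightarrow> mono_prod gen S = gmon S"
  by (simp add: mono_prod_eq_gprod_list gprod_list_gen_sorted)

lemma gmult_gprod_list_sorted:
  fixes g :: "nat \<Rightarrow> 'a::field_char_0 grass"
  assumes odd: "\<And>i. godd (g i)" and "sorted_wrt (<) xs"
  shows "gmult (g i) (gprod_list g xs)
    = gscale (if i \<in> set xs then 0 else gsign {i} (set xs)) (gprod_list g (insort i xs))"
  using assms(2)
proof (induction xs)
  case Nil
  then show ?case by simp
next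
  case (Cons s xs)
  have sorted: "sorted_wrt (<) xs" and above: "\<forall>x\<in>set xs. s < x"
    using Cons.prems by auto
  consider "i < s" | "i = s" | "s < i" by linarith
  then show ?case
  proof cases
    case 1
    with above have below: "\<forall>x\<in>set (s # xs). i < x" by auto
    then have "i \<notin> set (s # xs)" by blast
    with 1 below show ?thesis by (simp add: gsign_singleton_below del: set_simps)
  next
    case 2
    then have "gmult (g i) (gprod_list g (s # xs)) = gmult (gmult (g s) (g s)) (gprod_list g xs)"
      by (simp add: gmult_assoc)
    with 2 show ?thesis by (simp add: gmult_self_eq_zero[OF odd])
  next
    case 3
    have "s \<notin> set xs" using above by auto
    have "gmult (g i) (gprod_list g (s # xs)) = gmult (gmult (g i) (g s)) (gprod_list g xs)"
      by (simp add: gmult_assoc)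
    also have "\<dots> = gscale (-1) (gmult (g s) (gmult (g i) (gprod_list g xs)))"
      by (simp add: gmult_anticomm[OF odd odd, of i s] gneg_eq_gscale gmult_gscale_left
          gmult_assoc)
    also have "\<dots> = gscale (- (if i \<in> set xs then 0 else gsign {i} (set xs)))
        (gprod_list g (s # insort i xs))"
      by (simp add: Cons.IH[OF sorted] gmult_gscale_right)
    also have "\<dots> = gscale (if i \<in> set (s # xs) then 0 else gsign {i} (set (s # xs)))
        (gprod_list g (insort i (s # xs)))"
      using 3 \<open>s \<notin> set xs\<close> by (simp add: gsign_singleton_insert_below)
    finally show ?thesis .
  qed
qed

lemma gmult_mono_prod:
  fixes g :: "nat \<Rightarrow> 'a::field_char_0 grass"
  assumes "\<And>i. godd (g i)" "finite S"
  shows "gmult (g i) (mono_prod g S)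
    = gscale (if i \<in> S then 0 else gsign {i} S) (mono_prod g (insert i S))"
  using gmult_gprod_list_sorted[where g = g, OF assms(1), of "sorted_list_of_set S" i] assms(2)
  by (cases "i \<in> S") (simp_all add: mono_prod_eq_gprod_list sorted_list_of_set_insert)

definition lin_ext :: "(nat set \<Rightarrow> 'a::field grass) \<Rightarrow> 'a grass \<Rightarrow> 'a grass" where
  "lin_ext P x = (\<lambda>T. \<Sum>S\<in>{S. x S \<noteq> 0}. x S * P S T)"

lemma lin_ext_eq_lincomb: "lin_ext P x = lincomb {S. x S \<noteq> 0} x P"
  by (simp add: lin_ext_def lincomb_def)

lemma lin_ext_eq_lincomb_superset:
  assumes "finite F" "{S. x S \<noteq> 0} \<subseteq> F"
  shows "lin_ext P x = lincomb F x P"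
  unfolding lin_ext_def lincomb_def
  by (rule ext, rule sum.mono_neutral_left) (use assms in auto)

lemma lin_ext_gmon: "lin_ext P (gmon S) = P S"
  by (simp add: lin_ext_eq_lincomb_superset[of "{S}"] gmon_def lincomb_def)

lemma lin_ext_in_grass:
  "x \<in> grass \<Longrightarrow> (\<And>S. finite S \<Longrightarrow> P S \<in> grass) \<Longrightarrow> lin_ext P x \<in> grass"
  unfolding lin_ext_eq_lincomb
  by (rule lincomb_in_grass) (auto simp: grass_def)

lemma glinear_lin_ext: "glinear (lin_ext P)"
proof -
  have "lin_ext P (gadd x y) = gadd (lin_ext P x) (lin_ext P y)"
    if "x \<in> grass" "y \<in> grass" for x y
  proof -
    let ?F = "{S. x S \<noteq> 0} \<union> {S. y S \<noteq> 0}"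
    have "finite ?F" using that by (simp add: grass_finite_support)
    then have "lin_ext P (gadd x y) = lincomb ?F (gadd x y) P"
      "lin_ext P x = lincomb ?F x P" "lin_ext P y = lincomb ?F y P"
      by (auto intro!: lin_ext_eq_lincomb_superset simp: gadd_def)
    then show ?thesis
      by (simp add: lincomb_def gadd_def sum.distrib distrib_right)
  qed
  moreover have "lin_ext P (gscale c x) = gscale c (lin_ext P x)" if "x \<in> grass" for c x
  proof -
    have "finite {S. x S \<noteq> 0}" using that by (simp add: grass_finite_support)
    then have "lin_ext P (gscale c x) = lincomb {S. x S \<noteq> 0} (gscale c x) P"
      by (auto intro!: lin_ext_eq_lincomb_superset simp: gscale_def)
    then show ?thesis
      by (simp add: lin_ext_eq_lincomb lincomb_def gscale_def sum_distrib_left ac_simps)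
  qed
  ultimately show ?thesis by (simp add: glinear_def)
qed

lemma glinear_eq_lin_ext:
  assumes "glinear h" "x \<in> grass"
  shows "h x = lin_ext (\<lambda>S. h (gmon S)) x"
proof -
  have "h x = h (lincomb {S. x S \<noteq> 0} x gmon)"
    using assms(2) by (simp add: lincomb_gmon grass_finite_support)
  also have "\<dots> = lincomb {S. x S \<noteq> 0} x (\<lambda>S. h (gmon S))"
    using assms by (intro glinear_lincomb) (auto simp: grass_finite_support grass_finite_monomial)
  finally show ?thesis
    by (simp add: lin_ext_eq_lincomb)
qed

definition grass_subst :: "(nat \<Rightarrow> 'a::field grass) \<Rightarrow> 'a grass \<Rightarrow> 'a grass" where
  "grass_subst g = lin_ext (mono_prod g)"

lemma linearization_eq_grass_subst: "linearization \<phi> = grass_subst (lin_part \<phi>)"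
  by (simp add: fun_eq_iff linearization_def grass_subst_def lin_ext_def)

lemma grass_subst_gmon: "grass_subst g (gmon S) = mono_prod g S"
  by (simp add: grass_subst_def lin_ext_gmon)

lemma grass_subst_gen: "g i \<in> grass \<Longrightarrow> grass_subst g (gen i) = g i"
  by (simp add: gen_eq_gmon grass_subst_gmon mono_prod_eq_gprod_list gmult_gone_right)

lemma grass_subst_in_grass: "(\<And>i. g i \<in> grass) \<Longrightarrow> x \<in> grass \<Longrightarrow> grass_subst g x \<in> grass"
  by (simp add: grass_subst_def lin_ext_in_grass)

lemma glinear_grass_subst: "glinear (grass_subst g)"
  by (simp add: grass_subst_def glinear_lin_ext)

lemma grass_subst_gone: "grass_subst g gone = gone"
  using grass_subst_gmon[of g "{}"] by (simp add: mono_prod_def flip: gone_eq_gmon)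

lemma grass_subst_gmult_gen:
  fixes g :: "nat \<Rightarrow> 'a::field_char_0 grass"
  assumes odd: "\<And>i. godd (g i)" and x: "x \<in> grass"
  shows "grass_subst g (gmult (gen i) x) = gmult (g i) (grass_subst g x)"
proof -
  let ?F = "{S. x S \<noteq> 0}"
  have "grass_subst g (gmult (gen i) x)
      = grass_subst g (lincomb ?F x (\<lambda>S. gmult (gen i) (gmon S)))"
    by (simp add: lincomb_gmon[OF grass_finite_support[OF x]] gmult_lincomb_right[symmetric])
  also have "\<dots> = lincomb ?F x (\<lambda>S. grass_subst g (gmult (gen i) (gmon S)))"
    using x by (intro glinear_lincomb[OF glinear_grass_subst])
      (auto simp: grass_finite_support grass_finite_monomial)
  also have "\<dots> = lincomb ?F x (\<lambda>S. gmult (g i) (mono_prod g S))"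
  proof (rule lincomb_cong)
    fix S assume "S \<in> ?F"
    then have "finite S" using x by (simp add: grass_finite_monomial)
    then show "grass_subst g (gmult (gen i) (gmon S)) = gmult (g i) (mono_prod g S)"
      by (simp add: gmult_gen_gmon glinear_gscale[OF glinear_grass_subst] grass_subst_gmon
          gmult_mono_prod[where g = g, OF odd])
  qed
  also have "\<dots> = gmult (g i) (grass_subst g x)"
    by (simp add: gmult_lincomb_right grass_subst_def lin_ext_eq_lincomb)
  finally show ?thesis .
qed

lemma grass_subst_gmult_gprod_list:
  fixes g :: "nat \<Rightarrow> 'a::field_char_0 grass"
  assumes g: "\<And>i. g i \<in> grass" "\<And>i. godd (g i)" and z: "z \<in> grass"
  shows "grass_subst g (gmult (gprod_list gen xs) z) = gmult (gprod_list g xs) (grass_subst g z)"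
proof (induction xs)
  case Nil
  show ?case
    using z by (simp add: gmult_gone_left grass_subst_in_grass g)
next
  case (Cons i xs)
  have "grass_subst g (gmult (gprod_list gen (i # xs)) z)
      = gmult (g i) (grass_subst g (gmult (gprod_list gen xs) z))"
    using z by (simp add: gmult_assoc grass_subst_gmult_gen g)
  with Cons.IH show ?case
    by (simp add: gmult_assoc)
qed

lemma grass_subst_gmult:
  fixes g :: "nat \<Rightarrow> 'a::field_char_0 grass"
  assumes g: "\<And>i. g i \<in> grass" "\<And>i. godd (g i)" and x: "x \<in> grass" and y: "y \<in> grass"
  shows "grass_subst g (gmult x y) = gmult (grass_subst g x) (grass_subst g y)"
proof -
  let ?F = "{S. x S \<noteq> 0}"
  have "grass_subst g (gmult x y) = grass_subst g (lincomb ?F x (\<lambda>S. gmult (gmon S) y))"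
    by (simp add: lincomb_gmon[OF grass_finite_support[OF x]] gmult_lincomb_left[symmetric])
  also have "\<dots> = lincomb ?F x (\<lambda>S. grass_subst g (gmult (gmon S) y))"
    using x y by (intro glinear_lincomb[OF glinear_grass_subst])
      (auto simp: grass_finite_support grass_finite_monomial)
  also have "\<dots> = lincomb ?F x (\<lambda>S. gmult (mono_prod g S) (grass_subst g y))"
  proof (rule lincomb_cong)
    fix S assume "S \<in> ?F"
    then have gmon_S: "gmon S = gprod_list gen (sorted_list_of_set S)"
      using x by (simp add: gprod_list_gen_sorted grass_finite_monomial)
    show "grass_subst g (gmult (gmon S) y) = gmult (mono_prod g S) (grass_subst g y)"
      unfolding gmon_S by (simp add: grass_subst_gmult_gprod_list[OF g y] mono_prod_eq_gprod_list)
  qed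
  also have "\<dots> = gmult (grass_subst g x) (grass_subst g y)"
    by (simp add: gmult_lincomb_left grass_subst_def lin_ext_eq_lincomb)
  finally show ?thesis .
qed

lemma ghom_grass_subst:
  fixes g :: "nat \<Rightarrow> 'a::field_char_0 grass"
  assumes "\<And>i. g i \<in> grass" "\<And>i. godd (g i)"
  shows "ghom (grass_subst g)"
  using assms
  by (simp add: ghom_def glinear_grass_subst grass_subst_gmult grass_subst_in_grass
      grass_subst_gone)

lemma ghom_eq_grass_subst:
  assumes h: "ghom h" and x: "x \<in> grass"
  shows "h x = grass_subst (\<lambda>i. h (gen i)) x"
proof -
  have "h x = lincomb {S. x S \<noteq> 0} x (\<lambda>S. h (gmon S))"
    using glinear_eq_lin_ext[of h x] h x by (simp add: ghom_def lin_ext_eq_lincomb)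
  also have "\<dots> = lincomb {S. x S \<noteq> 0} x (mono_prod (\<lambda>i. h (gen i)))"
  proof (rule lincomb_cong)
    fix S assume "S \<in> {S. x S \<noteq> 0}"
    then have "finite S"
      using x by (simp add: grass_finite_monomial)
    then show "h (gmon S) = mono_prod (\<lambda>i. h (gen i)) S"
      using h by (simp add: ghom_mono_prod flip: mono_prod_gen)
  qed
  finally show ?thesis
    by (simp add: grass_subst_def lin_ext_eq_lincomb)
qed

lemma ghom_eqI:
  assumes "ghom h" "ghom k" "\<And>i. h (gen i) = k (gen i)" "x \<in> grass"
  shows "h x = k x"
proof -
  have "h x = grass_subst (\<lambda>i. h (gen i)) x"
    using assms(1,4) by (rule ghom_eq_grass_subst)
  also have "\<dots> = grass_subst (\<lambda>i. k (gen i)) x"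
    using assms(3) by simp
  also have "\<dots> = k x"
    using assms(2,4) by (rule ghom_eq_grass_subst[symmetric])
  finally show ?thesis .
qed

section \<open>Unitriangular substitutions are bijective\<close>

definition unitriangular :: "(nat \<Rightarrow> 'a::field grass) \<Rightarrow> nat set \<Rightarrow> bool" where
  "unitriangular g M \<longleftrightarrow> (\<forall>i. g i \<in> grass) \<and> (\<forall>i. g i {i} = 1) \<and>
     (\<forall>i U. g i U \<noteq> 0 \<longrightarrow> U = {i} \<or> 2 \<le> card U) \<and>
     (\<forall>i U. g i U \<noteq> 0 \<longrightarrow> U \<subseteq> insert i M)"

lemma unitriangular_in_grass: "unitriangular g M \<Longrightarrow> g i \<in> grass"
  by (simp add: unitriangular_def)

lemma gprod_list_support:
  assumes g: "unitriangular g M" and nonzero: "gprod_list g xs T \<noteq> 0"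
  shows "length xs \<le> card T \<and> T \<subseteq> set xs \<union> M \<and> finite T"
  using nonzero
proof (induction xs arbitrary: T)
  case Nil
  then show ?case by (auto simp: gone_def split: if_splits)
next
  case (Cons s xs)
  then have "finite T"
    using gmult_infinite by fastforce
  with Cons.prems obtain A where "A \<subseteq> T" and nonzero_A: "g s A \<noteq> 0"
    and nonzero_rest: "gprod_list g xs (T - A) \<noteq> 0"
    unfolding gprod_list_Cons gmult_finite[OF \<open>finite T\<close>]
    by (auto elim: sum.not_neutral_contains_not_neutral)
  have "A = {s} \<or> 2 \<le> card A" "A \<subseteq> insert s M"
    using g nonzero_A by (auto simp: unitriangular_def)
  then have "1 \<le> card A" "A \<subseteq> insert s M"
    by auto
  with Cons.IH[OF nonzero_rest] card_Int_Diff[OF \<open>finite T\<close>, of A] \<open>A \<subseteq> T\<close> \<open>finite T\<close>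
  show ?case by (auto simp: Int_absorb1)
qed

lemma gprod_list_leading_coeff:
  assumes g: "unitriangular g M" and "sorted_wrt (<) xs" and "finite T" "card T = length xs"
  shows "gprod_list g xs T = (if T = set xs then 1 else 0)"
  using assms(2-)
proof (induction xs arbitrary: T)
  case Nil
  then show ?case by (simp add: gone_def)
next
  case (Cons s xs)
  have sorted: "sorted_wrt (<) xs" and above: "\<forall>x\<in>set xs. s < x"
    using Cons.prems by auto
  let ?t = "\<lambda>A. gsign A (T - A) * g s A * gprod_list g xs (T - A)"
  have only_singleton: "?t A = 0" if "A \<subseteq> T" "A \<noteq> {s}" for A
  proof (rule ccontr)
    assume "?t A \<noteq> 0"
    then have "2 \<le> card A" "length xs \<le> card (T - A)"
      using g that gprod_list_support[OF g, of xs "T - A"] by (auto simp: unitriangular_def)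
    with card_Int_Diff[OF \<open>finite T\<close>, of A] \<open>A \<subseteq> T\<close> Cons.prems show False
      by (simp add: Int_absorb1)
  qed
  have "gprod_list g (s # xs) T = (\<Sum>A\<in>Pow T. if A = {s} then ?t A else 0)"
    unfolding gprod_list_Cons gmult_finite[OF \<open>finite T\<close>]
    using only_singleton by (intro sum.cong) auto
  also have "\<dots> = (if s \<in> T then gsign {s} (T - {s}) * gprod_list g xs (T - {s}) else 0)"
    using \<open>finite T\<close> g by (simp add: sum.delta' unitriangular_def)
  also have "\<dots> = (if T = set (s # xs) then 1 else 0)"
  proof (cases "s \<in> T")
    case True
    then have "gprod_list g xs (T - {s}) = (if T - {s} = set xs then 1 else 0)"
      using Cons.IH[OF sorted, of "T - {s}"] Cons.prems by simp
    moreover have "T - {s} = set xs \<longleftrightarrow> T = set (s # xs)"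
      using True above by auto
    ultimately show ?thesis
      using True above by (auto simp: gsign_singleton_below)
  qed auto
  finally show ?case .
qed

lemma mono_prod_support:
  assumes "unitriangular g M" "finite S" "mono_prod g S T \<noteq> 0"
  shows "card S \<le> card T \<and> T \<subseteq> S \<union> M \<and> finite T"
  using gprod_list_support[of g M "sorted_list_of_set S" T] assms
  by (simp add: mono_prod_eq_gprod_list)

lemma mono_prod_leading_coeff:
  assumes "unitriangular g M" "finite S" "finite T" "card T = card S"
  shows "mono_prod g S T = (if T = S then 1 else 0)"
  using gprod_list_leading_coeff[of g M "sorted_list_of_set S" T] assms
  by (simp add: mono_prod_eq_gprod_list)

lemma mono_prod_off_diagonal:
  assumes g: "unitriangular g M" and "finite S" and nonzero: "mono_prod g S T \<noteq> 0" and "T \<noteq> S"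
  shows "card S < card T \<and> T \<subseteq> S \<union> M"
proof -
  from mono_prod_support[OF g \<open>finite S\<close> nonzero]
  have "card S \<le> card T" "T \<subseteq> S \<union> M" "finite T" by auto
  moreover have "card T \<noteq> card S"
    using mono_prod_leading_coeff[OF g \<open>finite S\<close> \<open>finite T\<close>] nonzero \<open>T \<noteq> S\<close> by auto
  ultimately show ?thesis by auto
qed

lemma grass_subst_coeff_at_minimal:
  assumes g: "unitriangular g M" and x: "x \<in> grass"
    and minimal: "x S\<^sub>0 \<noteq> 0" "\<And>S. x S \<noteq> 0 \<Longrightarrow> card S\<^sub>0 \<le> card S"
  shows "grass_subst g x S\<^sub>0 = x S\<^sub>0"
proof -
  let ?F = "{S. x S \<noteq> 0}"
  have finite_S: "finite S" if "S \<in> ?F" for S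
    using x that by (simp add: grass_finite_monomial)
  have "x S * mono_prod g S S\<^sub>0 = 0" if S: "S \<in> ?F - {S\<^sub>0}" for S
  proof (rule ccontr)
    assume "x S * mono_prod g S S\<^sub>0 \<noteq> 0"
    with S have "card S < card S\<^sub>0"
      using mono_prod_off_diagonal[OF g finite_S, of S S\<^sub>0] by auto
    with minimal(2) S show False
      by fastforce
  qed
  moreover have "mono_prod g S\<^sub>0 S\<^sub>0 = 1"
    using mono_prod_leading_coeff[OF g] finite_S minimal(1) by simp
  ultimately show ?thesis
    using x minimal(1)
    by (simp add: grass_subst_def lin_ext_def sum.remove[of ?F S\<^sub>0] grass_finite_support)
qed

lemma grass_subst_eq_zero_imp:
  assumes g: "unitriangular g M" and x: "x \<in> grass" and "grass_subst g x = (\<lambda>_. 0)"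
  shows "x = (\<lambda>_. 0)"
proof (rule ccontr)
  assume "x \<noteq> (\<lambda>_. 0)"
  then obtain S where "x S \<noteq> 0" by auto
  then obtain S\<^sub>0 where S\<^sub>0: "x S\<^sub>0 \<noteq> 0" "\<And>S. x S \<noteq> 0 \<Longrightarrow> card S\<^sub>0 \<le> card S"
    using ex_has_least_nat[of "\<lambda>S. x S \<noteq> 0" S card] by blast
  have "grass_subst g x S\<^sub>0 = x S\<^sub>0"
    using S\<^sub>0 by (rule grass_subst_coeff_at_minimal[OF g x])
  with assms(3) S\<^sub>0(1) show False
    by simp
qed

lemma inj_on_grass_subst:
  assumes "unitriangular g M"
  shows "inj_on (grass_subst g) grass"
proof (rule inj_onI)
  fix x y :: "'a grass"
  assume x: "x \<in> grass" and y: "y \<in> grass" and eq: "grass_subst g x = grass_subst g y"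
  have "grass_subst g (gadd x (gscale (-1) y))
      = gadd (grass_subst g x) (gscale (-1) (grass_subst g y))"
    using x y by (simp add: glinear_gadd[OF glinear_grass_subst] glinear_gscale[OF glinear_grass_subst])
  also have "\<dots> = (\<lambda>_. 0)"
    using eq by (simp add: gadd_def gscale_def)
  finally have "gadd x (gscale (-1) y) = (\<lambda>_. 0)"
    by (rule grass_subst_eq_zero_imp[OF assms, rotated]) (simp add: x y)
  then show "x = y"
    by (simp add: gadd_def gscale_def fun_eq_iff)
qed

lemma lincomb_in_image:
  assumes h: "glinear h" and F: "finite F" and P: "\<And>s. s \<in> F \<Longrightarrow> P s \<in> h ` grass"
  shows "lincomb F c P \<in> h ` grass"
proof -
  have "\<forall>s\<in>F. \<exists>y. y \<in> grass \<and> h y = P s"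
    using P by (fastforce simp: image_iff)
  from bchoice[OF this] obtain Q where Q: "\<forall>s\<in>F. Q s \<in> grass \<and> h (Q s) = P s"
    by blast
  have "h (lincomb F c Q) = lincomb F c (\<lambda>s. h (Q s))"
    using Q by (simp add: glinear_lincomb[OF h F])
  also have "\<dots> = lincomb F c P"
    using Q by (simp cong: lincomb_cong)
  finally have "lincomb F c P = h (lincomb F c Q)" ..
  moreover have "lincomb F c Q \<in> grass"
    using Q F by simp
  ultimately show ?thesis
    by (rule image_eqI)
qed

lemma gmon_in_image_grass_subst:
  assumes g: "unitriangular g M" and N: "finite N" "M \<subseteq> N"
  shows "T \<subseteq> N \<Longrightarrow> gmon T \<in> grass_subst g ` grass"
proof (induction "card N - card T" arbitrary: T rule: less_induct)
  case less
  have "finite T"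
    using less.prems N(1) by (rule finite_subset)
  define R where "R U = (if U = T then 0 else mono_prod g T U)" for U
  have R_higher: "U \<subseteq> N \<and> card T < card U" if "R U \<noteq> 0" for U
    using that mono_prod_off_diagonal[OF g \<open>finite T\<close>, of U] less.prems N
    by (auto simp: R_def split: if_splits)
  have finite_R: "finite {U. R U \<noteq> 0}"
    by (rule finite_subset[of _ "Pow N"]) (use R_higher N(1) in auto)
  have "gmon U \<in> grass_subst g ` grass" if "U \<in> {U. R U \<noteq> 0}" for U
  proof -
    have "card T < card U" "card U \<le> card N"
      using R_higher that N(1) by (auto simp: card_mono)
    then have "card N - card U < card N - card T"
      by linarith
    then show ?thesis
      using less.hyps R_higher that by blast
  qed
  then have "lincomb {U. R U \<noteq> 0} R gmon \<in> grass_subst g ` grass"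
    by (rule lincomb_in_image[OF glinear_grass_subst finite_R])
  then obtain y where y: "y \<in> grass" "grass_subst g y = R"
    by (auto simp: lincomb_gmon[OF finite_R])
  have "grass_subst g (gadd (gmon T) (gscale (-1) y)) = gadd (mono_prod g T) (gscale (-1) R)"
    using y \<open>finite T\<close>
    by (simp add: glinear_gadd[OF glinear_grass_subst] glinear_gscale[OF glinear_grass_subst]
        grass_subst_gmon)
  also have "\<dots> = gmon T"
    using mono_prod_leading_coeff[OF g \<open>finite T\<close> \<open>finite T\<close>]
    by (auto simp: fun_eq_iff gadd_def gscale_def R_def gmon_def)
  finally have "gmon T = grass_subst g (gadd (gmon T) (gscale (-1) y))" ..
  moreover have "gadd (gmon T) (gscale (-1) y) \<in> grass"
    using y \<open>finite T\<close> by simp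
  ultimately show ?case
    by (rule image_eqI)
qed

lemma grass_subst_image:
  assumes g: "unitriangular g M" and "finite M"
  shows "grass_subst g ` grass = grass"
proof
  show "grass_subst g ` grass \<subseteq> grass"
    using grass_subst_in_grass unitriangular_in_grass[OF g] by blast
  show "grass \<subseteq> grass_subst g ` grass"
  proof
    fix x :: "'a grass"
    assume x: "x \<in> grass"
    define N where "N = M \<union> \<Union>{S. x S \<noteq> 0}"
    have "finite N"
      using assms x by (auto simp: N_def grass_def)
    have "gmon S \<in> grass_subst g ` grass" if "S \<in> {S. x S \<noteq> 0}" for S
      using that by (intro gmon_in_image_grass_subst[OF g \<open>finite N\<close>]) (auto simp: N_def)
    then have "lincomb {S. x S \<noteq> 0} x gmon \<in> grass_subst g ` grass"
      by (rule lincomb_in_image[OF glinear_grass_subst grass_finite_support[OF x]])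
    then show "x \<in> grass_subst g ` grass"
      by (simp add: lincomb_gmon grass_finite_support[OF x])
  qed
qed

lemma bij_betw_grass_subst:
  "unitriangular g M \<Longrightarrow> finite M \<Longrightarrow> bij_betw (grass_subst g) grass grass"
  by (simp add: bij_betw_def inj_on_grass_subst grass_subst_image)

section \<open>Graded identities are invariant under isomorphism\<close>

lemma eval_word_in_grass: "(\<And>v. \<sigma> v \<in> grass) \<Longrightarrow> eval_word \<sigma> w \<in> grass"
  by (induction w) (simp_all add: eval_word_def)

lemma ghom_eval_word:
  assumes h: "ghom h" and \<sigma>: "\<And>v. \<sigma> v \<in> grass"
  shows "h (eval_word \<sigma> w) = eval_word (\<lambda>v. h (\<sigma> v)) w"
proof (induction w)
  case Nil
  then show ?case using h by (simp add: eval_word_def ghom_def)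
next
  case (Cons v w)
  have "h (eval_word \<sigma> (v # w)) = gmult (h (\<sigma> v)) (h (eval_word \<sigma> w))"
    using h \<sigma> eval_word_in_grass[OF \<sigma>] by (simp add: eval_word_def ghom_def)
  with Cons.IH show ?case
    by (simp add: eval_word_def)
qed

lemma eval_poly_eq_lincomb: "eval_poly f \<sigma> = lincomb {w. f w \<noteq> 0} f (eval_word \<sigma>)"
  by (simp add: eval_poly_def lincomb_def)

lemma eval_poly_in_grass:
  "f \<in> free_alg \<Longrightarrow> (\<And>v. \<sigma> v \<in> grass) \<Longrightarrow> eval_poly f \<sigma> \<in> grass"
  by (simp add: eval_poly_eq_lincomb free_alg_def eval_word_in_grass)

lemma ghom_eval_poly:
  assumes h: "ghom h" and f: "f \<in> free_alg" and \<sigma>: "\<And>v. \<sigma> v \<in> grass"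
  shows "h (eval_poly f \<sigma>) = eval_poly f (\<lambda>v. h (\<sigma> v))"
proof -
  have "glinear h" "finite {w. f w \<noteq> 0}"
    using h f by (simp_all add: ghom_def free_alg_def)
  then show ?thesis
    by (simp add: eval_poly_eq_lincomb glinear_lincomb eval_word_in_grass[OF \<sigma>]
        ghom_eval_word[OF h \<sigma>])
qed

lemma graded_assignment_in_grass: "graded_assignment \<psi> \<sigma> \<Longrightarrow> \<sigma> v \<in> grass"
  by (cases v) (auto simp: graded_assignment_def even_part_def odd_part_def)

lemma graded_assignment_comp_iff:
  assumes \<theta>: "ghom \<theta>" "inj_on \<theta> grass"
    and \<psi>: "\<forall>x\<in>grass. \<psi> x \<in> grass" "\<forall>x\<in>grass. \<theta> (\<psi> x) = \<phi> (\<theta> x)"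
    and \<sigma>: "\<And>v. \<sigma> v \<in> grass"
  shows "graded_assignment \<phi> (\<lambda>v. \<theta> (\<sigma> v)) \<longleftrightarrow> graded_assignment \<psi> \<sigma>"
proof -
  have \<theta>_grass: "\<theta> x \<in> grass" if "x \<in> grass" for x
    using \<theta>(1) that by (simp add: ghom_def)
  have even: "\<theta> x \<in> even_part \<phi> \<longleftrightarrow> x \<in> even_part \<psi>" if "x \<in> grass" for x
  proof -
    have "\<phi> (\<theta> x) = \<theta> x \<longleftrightarrow> \<theta> (\<psi> x) = \<theta> x"
      using \<psi>(2) that by simp
    also have "\<dots> \<longleftrightarrow> \<psi> x = x"
      using \<theta>(2) \<psi>(1) that by (simp add: inj_on_eq_iff)
    finally show ?thesis
      using that \<theta>_grass by (simp add: even_part_def)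
  qed
  have odd: "\<theta> x \<in> odd_part \<phi> \<longleftrightarrow> x \<in> odd_part \<psi>" if "x \<in> grass" for x
  proof -
    have "\<phi> (\<theta> x) = gneg (\<theta> x) \<longleftrightarrow> \<theta> (\<psi> x) = \<theta> (gneg x)"
      using \<psi>(2) \<theta>(1) that by (simp add: ghom_def glinear_gneg)
    also have "\<dots> \<longleftrightarrow> \<psi> x = gneg x"
      using \<theta>(2) \<psi>(1) that by (simp add: inj_on_eq_iff)
    finally show ?thesis
      using that \<theta>_grass by (simp add: odd_part_def)
  qed
  show ?thesis
    using \<sigma> even odd by (simp add: graded_assignment_def)
qed

lemma T2_subset_if_intertwining:
  assumes \<theta>: "ghom \<theta>" "inj_on \<theta> grass"
    and \<psi>: "\<forall>x\<in>grass. \<psi> x \<in> grass" "\<forall>x\<in>grass. \<theta> (\<psi> x) = \<phi> (\<theta> x)"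
  shows "T2 \<phi> \<subseteq> T2 \<psi>"
proof
  fix f
  assume "f \<in> T2 \<phi>"
  then have f: "f \<in> free_alg"
    and identity: "\<And>\<tau>. graded_assignment \<phi> \<tau> \<Longrightarrow> eval_poly f \<tau> = (\<lambda>_. 0)"
    by (auto simp: T2_def)
  have "eval_poly f \<sigma> = (\<lambda>_. 0)" if \<sigma>: "graded_assignment \<psi> \<sigma>" for \<sigma>
  proof -
    have \<sigma>_grass: "\<sigma> v \<in> grass" for v
      using \<sigma> by (rule graded_assignment_in_grass)
    have "graded_assignment \<phi> (\<lambda>v. \<theta> (\<sigma> v))"
      using \<sigma> graded_assignment_comp_iff[OF \<theta> \<psi> \<sigma>_grass] by simp
    then have "\<theta> (eval_poly f \<sigma>) = \<theta> (\<lambda>_. 0)"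
      using identity \<theta>(1) by (simp add: ghom_eval_poly[OF \<theta>(1) f \<sigma>_grass] ghom_def glinear_zero)
    then show ?thesis
      using \<theta>(2) f \<sigma>_grass by (simp add: inj_on_eq_iff eval_poly_in_grass)
  qed
  with f show "f \<in> T2 \<psi>"
    by (simp add: T2_def)
qed

lemma T2_supset_if_intertwining:
  assumes \<theta>: "ghom \<theta>" "inj_on \<theta> grass" "\<theta> ` grass = grass"
    and \<psi>: "\<forall>x\<in>grass. \<psi> x \<in> grass" "\<forall>x\<in>grass. \<theta> (\<psi> x) = \<phi> (\<theta> x)"
  shows "T2 \<psi> \<subseteq> T2 \<phi>"
proof
  fix f
  assume "f \<in> T2 \<psi>"
  then have f: "f \<in> free_alg"
    and identity: "\<And>\<sigma>. graded_assignment \<psi> \<sigma> \<Longrightarrow> eval_poly f \<sigma> = (\<lambda>_. 0)"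
    by (auto simp: T2_def)
  have "eval_poly f \<tau> = (\<lambda>_. 0)" if \<tau>: "graded_assignment \<phi> \<tau>" for \<tau>
  proof -
    define \<sigma> where "\<sigma> v = inv_into grass \<theta> (\<tau> v)" for v
    have \<tau>_image: "\<tau> v \<in> \<theta> ` grass" for v
      using graded_assignment_in_grass[OF \<tau>] \<theta>(3) by simp
    then have \<sigma>_grass: "\<sigma> v \<in> grass" for v
      by (simp add: \<sigma>_def inv_into_into)
    have \<tau>_eq: "\<tau> = (\<lambda>v. \<theta> (\<sigma> v))"
      using \<tau>_image by (simp add: \<sigma>_def f_inv_into_f)
    then have "graded_assignment \<psi> \<sigma>"
      using \<tau> graded_assignment_comp_iff[OF \<theta>(1,2) \<psi> \<sigma>_grass] by simp
    then show ?thesis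
      unfolding \<tau>_eq using identity \<theta>(1)
      by (simp flip: ghom_eval_poly[OF \<theta>(1) f \<sigma>_grass] add: ghom_def glinear_zero)
  qed
  with f show "f \<in> T2 \<phi>"
    by (simp add: T2_def)
qed

lemma T2_eq_if_intertwining:
  assumes "ghom \<theta>" "bij_betw \<theta> grass grass"
    and "\<forall>x\<in>grass. \<psi> x \<in> grass" "\<forall>x\<in>grass. \<theta> (\<psi> x) = \<phi> (\<theta> x)"
  shows "T2 \<psi> = T2 \<phi>"
  using assms T2_subset_if_intertwining[of \<theta> \<psi> \<phi>] T2_supset_if_intertwining[of \<theta> \<psi> \<phi>]
  by (auto simp: bij_betw_def)

section \<open>Involutions of type S4\<close>

lemma Iplus_Iminus_disjoint: "Iplus \<phi> \<inter> Iminus (\<phi> :: 'a::field_char_0 grass \<Rightarrow> 'a grass) = {}"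
proof -
  have "gneg (gen n) \<noteq> (gen n :: 'a grass)" for n
  proof
    assume "gneg (gen n) = (gen n :: 'a grass)"
    then have "gneg (gen n) {n} = (gen n {n} :: 'a)"
      by simp
    then show False
      by (simp add: gen_def gneg_def)
  qed
  then show ?thesis
    by (auto simp: Iplus_def Iminus_def)
qed

text \<open>Conjugating by \<open>e_i\<close> with \<open>\<phi>(e_i) = -e_i\<close> and \<open>i\<close> outside the support of \<open>\<phi>(e_n)\<close>
  shows that \<open>e_i\<close> anticommutes with \<open>\<phi>(e_n)\<close>; since \<open>e_i\<close> commutes with monomials of even
  length, \<open>\<phi>(e_n)\<close> has none.\<close>

lemma godd_hom_gen:
  fixes \<phi> :: "'a::field_char_0 grass \<Rightarrow> 'a grass"
  assumes h: "ghom \<phi>" and "infinite (Iminus \<phi>)"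
  shows "godd (\<phi> (gen n))"
proof -
  let ?x = "\<phi> (gen n)"
  have x: "?x \<in> grass"
    using h by (simp add: ghom_def)
  then have "finite (\<Union>{S. ?x S \<noteq> 0})"
    by (auto simp: grass_def)
  with assms(2) have "infinite (Iminus \<phi> - \<Union>{S. ?x S \<noteq> 0})"
    using Diff_infinite_finite by blast
  then obtain i where "i \<in> Iminus \<phi> - \<Union>{S. ?x S \<noteq> 0}"
    using infinite_imp_nonempty by blast
  then have "i \<in> Iminus \<phi>" and i_outside: "\<And>S. ?x S \<noteq> 0 \<Longrightarrow> i \<notin> S"
    by auto
  then have phi_i: "\<phi> (gen i) = gneg (gen i)"
    by (simp add: Iminus_def)
  have "\<phi> (gmult (gen i) (gen n)) = \<phi> (gneg (gmult (gen n) (gen i)))"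
    using gmult_anticomm[of "gen i :: 'a grass" "gen n"] by simp
  then have anticomm: "gneg (gmult (gen i) ?x) = gmult ?x (gen i)"
    using h x phi_i
    by (simp add: ghom_def glinear_gscale gneg_eq_gscale gmult_gscale_left gmult_gscale_right)
  show ?thesis
    unfolding godd_def
  proof (intro allI impI)
    fix S
    assume nonzero: "?x S \<noteq> 0"
    then have "finite S" "i \<notin> S"
      using x i_outside by (auto simp: grass_finite_monomial)
    then have "- (gsign {i} S * ?x S) = gsign S {i} * ?x S"
      using fun_cong[OF anticomm, of "insert i S"]
      by (simp add: gneg_def gmult_gen_left gmult_gen_right)
    also have "\<dots> = (-1) ^ card S * gsign {i} S * ?x S"
      using gsign_swap[where 'a = 'a, of "{i}" S] \<open>finite S\<close> \<open>i \<notin> S\<close> by simp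
    finally show "odd (card S)"
      using nonzero gsign_nonzero[where 'a = 'a, of "{i}" S] by (cases "even (card S)") auto
  qed
qed

definition eigen_sign :: "('a::field grass \<Rightarrow> 'a grass) \<Rightarrow> nat \<Rightarrow> 'a" where
  "eigen_sign \<phi> i = (if i \<in> Iplus \<phi> then 1 else -1)"

definition eigen_gen :: "('a::field grass \<Rightarrow> 'a grass) \<Rightarrow> nat \<Rightarrow> 'a grass" where
  "eigen_gen \<phi> i = (if i \<in> Jset \<phi> then gadd (gen i) (gneg (avec \<phi> i)) else gen i)"

lemma not_in_Jset: "i \<notin> Jset \<phi> \<longleftrightarrow> i \<in> Iplus \<phi> \<or> i \<in> Iminus \<phi>"
  by (simp add: Jset_def Iset_def)

lemma avec_eq: "avec \<phi> j = gscale (1/2) (gadd (gen j) (\<phi> (gen j)))"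
  by (simp add: fun_eq_iff avec_def gscale_def gadd_def)

lemma eigen_gen_Jset:
  fixes \<phi> :: "'a::field_char_0 grass \<Rightarrow> 'a grass"
  shows "j \<in> Jset \<phi> \<Longrightarrow> eigen_gen \<phi> j = gscale (1/2) (gadd (gen j) (gneg (\<phi> (gen j))))"
  by (simp add: fun_eq_iff eigen_gen_def avec_def gscale_def gadd_def gneg_def field_simps)

lemma eigen_gen_not_Jset: "i \<notin> Jset \<phi> \<Longrightarrow> eigen_gen \<phi> i = gen i"
  by (simp add: eigen_gen_def)

locale S4_involution =
  fixes \<phi> :: "'a::field_char_0 grass \<Rightarrow> 'a grass"
  assumes automorphism: "is_automorphism \<phi>"
    and involutive: "\<forall>x\<in>grass. \<phi> (\<phi> x) = x"
    and infinite_Iminus: "infinite (Iminus \<phi>)"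
    and finite_Jset: "finite (Jset \<phi>)"
    and avec_long: "\<forall>j\<in>Jset \<phi>. \<forall>S. avec \<phi> j S \<noteq> 0 \<longrightarrow> 3 \<le> card S"
begin

lemma ghom_phi: "ghom \<phi>"
  using automorphism by (rule ghom_if_automorphism)

lemma phi_in_grass: "x \<in> grass \<Longrightarrow> \<phi> x \<in> grass"
  using ghom_phi by (simp add: ghom_def)

lemma avec_short_eq_zero: "j \<in> Jset \<phi> \<Longrightarrow> card S < 3 \<Longrightarrow> avec \<phi> j S = 0"
  using avec_long by fastforce

lemma eigen_gen_in_grass: "eigen_gen \<phi> i \<in> grass"
  by (cases "i \<in> Jset \<phi>") (simp_all add: eigen_gen_Jset eigen_gen_not_Jset phi_in_grass)

lemma godd_eigen_gen: "godd (eigen_gen \<phi> i)"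
  using godd_hom_gen[OF ghom_phi infinite_Iminus]
  by (cases "i \<in> Jset \<phi>") (simp_all add: eigen_gen_Jset eigen_gen_not_Jset)

lemma phi_eigen_gen: "\<phi> (eigen_gen \<phi> i) = gscale (eigen_sign \<phi> i) (eigen_gen \<phi> i)"
proof -
  consider "i \<in> Jset \<phi>" | "i \<in> Iplus \<phi>" | "i \<in> Iminus \<phi>" "i \<notin> Iplus \<phi>"
    using not_in_Jset by blast
  then show ?thesis
  proof cases
    case 1
    then have "i \<notin> Iplus \<phi>"
      by (simp add: Jset_def Iset_def)
    have "glinear \<phi>"
      using ghom_phi by (simp add: ghom_def)
    then have "\<phi> (eigen_gen \<phi> i) = gscale (1/2) (gadd (\<phi> (gen i)) (gneg (\<phi> (\<phi> (gen i)))))"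
      using 1 by (simp add: eigen_gen_Jset glinear_gadd glinear_gscale glinear_gneg phi_in_grass)
    also have "\<dots> = gscale (1/2) (gadd (\<phi> (gen i)) (gneg (gen i)))"
      using involutive by simp
    also have "\<dots> = gscale (eigen_sign \<phi> i) (eigen_gen \<phi> i)"
      using 1 \<open>i \<notin> Iplus \<phi>\<close>
      by (simp add: eigen_gen_Jset eigen_sign_def fun_eq_iff gscale_def gadd_def gneg_def)
    finally show ?thesis .
  next
    case 2
    then show ?thesis
      using Iplus_Iminus_disjoint by (auto simp: eigen_gen_def eigen_sign_def Jset_def Iset_def Iplus_def)
  next
    case 3
    then show ?thesis
      by (simp add: eigen_gen_def eigen_sign_def Jset_def Iset_def Iminus_def gneg_eq_gscale)
  qed
qed

lemma lin_part_eq: "lin_part \<phi> i = gscale (eigen_sign \<phi> i) (gen i)"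
proof (rule ext)
  fix U
  consider "i \<in> Jset \<phi>" | "i \<in> Iplus \<phi>" | "i \<in> Iminus \<phi>" "i \<notin> Iplus \<phi>"
    using not_in_Jset by blast
  then show "lin_part \<phi> i U = gscale (eigen_sign \<phi> i) (gen i) U"
  proof cases
    case 1
    then have "i \<notin> Iplus \<phi>"
      by (simp add: Jset_def Iset_def)
    have "\<phi> (gen i) U = 2 * avec \<phi> i U - gen i U"
      by (simp add: avec_def field_simps)
    moreover have "card U = 1 \<Longrightarrow> avec \<phi> i U = 0"
      using avec_short_eq_zero[OF 1] by simp
    moreover have "card U \<noteq> 1 \<Longrightarrow> gen i U = 0"
      by (auto simp: gen_def)
    ultimately show ?thesis
      using \<open>i \<notin> Iplus \<phi>\<close> by (auto simp: lin_part_def eigen_sign_def gscale_def)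
  next
    case 2
    then show ?thesis
      by (auto simp: lin_part_def eigen_sign_def gscale_def Iplus_def gen_def)
  next
    case 3
    then show ?thesis
      by (auto simp: lin_part_def eigen_sign_def gscale_def Iminus_def gen_def gneg_def)
  qed
qed

lemma unitriangular_eigen_gen: "\<exists>M. finite M \<and> unitriangular (eigen_gen \<phi>) M"
proof (intro exI conjI)
  let ?M = "\<Union>j\<in>Jset \<phi>. \<Union>{S. avec \<phi> j S \<noteq> 0}"
  have "avec \<phi> j \<in> grass" for j
    by (simp add: avec_eq phi_in_grass)
  then show "finite ?M"
    using finite_Jset by (auto simp: grass_def)
  have coeff: "eigen_gen \<phi> i U = (if i \<in> Jset \<phi> then gen i U - avec \<phi> i U else gen i U)" for i U
    by (simp add: eigen_gen_def gadd_def gneg_def)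
  have short: "i \<in> Jset \<phi> \<Longrightarrow> avec \<phi> i {i} = 0" for i
    using avec_short_eq_zero by simp
  show "unitriangular (eigen_gen \<phi>) ?M"
    unfolding unitriangular_def
  proof (intro conjI allI impI)
    fix i
    show "eigen_gen \<phi> i \<in> grass"
      by (rule eigen_gen_in_grass)
    show "eigen_gen \<phi> i {i} = 1"
      using short by (simp add: coeff gen_def)
  next
    fix i U
    assume nonzero: "eigen_gen \<phi> i U \<noteq> 0"
    show "U = {i} \<or> 2 \<le> card U"
      using nonzero avec_short_eq_zero[of i U] by (auto simp: coeff gen_def split: if_splits)
    show "U \<subseteq> insert i ?M"
      using nonzero by (auto simp: coeff gen_def split: if_splits)
  qed
qed

lemma ghom_linearization: "ghom (linearization \<phi>)"
  unfolding linearization_eq_grass_subst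
  by (rule ghom_grass_subst) (simp_all add: lin_part_eq)

lemma eigen_subst_intertwines:
  assumes "x \<in> grass"
  shows "grass_subst (eigen_gen \<phi>) (linearization \<phi> x) = \<phi> (grass_subst (eigen_gen \<phi>) x)"
proof -
  let ?\<theta> = "grass_subst (eigen_gen \<phi>)"
  have \<theta>: "ghom ?\<theta>"
    by (rule ghom_grass_subst[OF eigen_gen_in_grass godd_eigen_gen])
  have "?\<theta> (linearization \<phi> (gen i)) = \<phi> (?\<theta> (gen i))" for i
    using \<theta>
    by (simp add: linearization_eq_grass_subst grass_subst_gen lin_part_eq ghom_def glinear_gscale
        eigen_gen_in_grass phi_eigen_gen)
  then show ?thesis
    using ghom_eqI[OF ghom_comp[OF \<theta> ghom_linearization] ghom_comp[OF ghom_phi \<theta>] _ assms]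
    by simp
qed

theorem T2_eq_T2_linearization: "T2 \<phi> = T2 (linearization \<phi>)"
proof -
  obtain M where "finite M" "unitriangular (eigen_gen \<phi>) M"
    using unitriangular_eigen_gen by blast
  then have "bij_betw (grass_subst (eigen_gen \<phi>)) grass grass"
    by (rule bij_betw_grass_subst[rotated])
  moreover have "ghom (grass_subst (eigen_gen \<phi>))"
    by (rule ghom_grass_subst[OF eigen_gen_in_grass godd_eigen_gen])
  moreover have "\<forall>x\<in>grass. linearization \<phi> x \<in> grass"
    using ghom_linearization by (simp add: ghom_def)
  ultimately have "T2 (linearization \<phi>) = T2 \<phi>"
    by (simp add: T2_eq_if_intertwining eigen_subst_intertwines)
  then show ?thesis ..
qed

end

theorem mainTheorem4:
  fixes \<phi> :: "'a::field_char_0 grass \<Rightarrow> 'a grass"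
  assumes aut: "is_automorphism \<phi>"
    and invol: "\<forall>x\<in>grass. \<phi> (\<phi> x) = x"
    and S4_plus: "finite (Iplus \<phi>)"
    and S4_minus: "infinite (Iminus \<phi>)"
    and S4_J: "finite (Jset \<phi>)" "Jset \<phi> \<noteq> {}"
    and len3: "\<forall>j\<in>Jset \<phi>. \<forall>S. avec \<phi> j S \<noteq> 0 \<longrightarrow> 3 \<le> card S"
  shows "T2 \<phi> = T2 (linearization \<phi>)"
proof -
  interpret S4_involution \<phi>
    using aut invol S4_minus S4_J(1) len3 by unfold_locales
  show ?thesis
    by (rule T2_eq_T2_linearization)
qed

end
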